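(* Let $X=\ell_p$ for some $1\le p<\infty$, or $X=c_0$, considered as a Banach algebra under coordinatewise multiplication, and let $\lambda\in\mathbb C$ with $|\lambda|>1$. Let $\lambda B$ be the operator $\lambda B(x(1),x(2),x(3),\ldots)=(\lambda x(2),\lambda x(3),\lambda x(4),\ldots)$ on $X$. If $x$ is a frequently hypercyclic vector for $\lambda B$, then there exists a natural number $M$ such that the coordinatewise power $x^m$ is not a hypercyclic vector for $\lambda B$ for any $m\geq M$.
   Context: For an operator $T$ on $X$, a vector $x$ is hypercyclic if $\{x,Tx,T^2x,\ldots\}$ is dense in $X$; it is frequently hypercyclic if for every non-empty open $U\subset X$ the set $\{n\in\mathbb N_0: T^nx\in U\}$ has positive lower density, where the lower density of $A\subset\mathbb N_0$ is $\liminf_{N\to\infty}\frac{\mathrm{card}\{0\le n\le N:n\in A\}}{N+1}$. *)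

theory Defs
  imports "HOL-Analysis.Analysis" "HOL-Library.Liminf_Limsup"
begin

text \<open>Sequence spaces over the complex numbers, modelled as subsets of nat => complex
  (index 0 corresponds to the paper's coordinate 1).\<close>

definition ell :: "real \<Rightarrow> (nat \<Rightarrow> complex) set" where
  "ell p = {x. summable (\<lambda>n. norm (x n) powr p)}"

definition ell_norm :: "real \<Rightarrow> (nat \<Rightarrow> complex) \<Rightarrow> real" where
  "ell_norm p x = (\<Sum>n. norm (x n) powr p) powr (1 / p)"

definition c_zero :: "(nat \<Rightarrow> complex) set" where
  "c_zero = {x. x \<longlonglongrightarrow> 0}"

definition sup_norm :: "(nat \<Rightarrow> complex) \<Rightarrow> real" where
  "sup_norm x = Sup (range (\<lambda>n. norm (x n)))"

definition open_in_space :: "(nat \<Rightarrow> complex) set \<Rightarrow> ((nat \<Rightarrow> complex) \<Rightarrow> real)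
    \<Rightarrow> (nat \<Rightarrow> complex) set \<Rightarrow> bool" where
  "open_in_space X nrm U \<longleftrightarrow> U \<subseteq> X \<and>
     (\<forall>u\<in>U. \<exists>e>0. {y\<in>X. nrm (y - u) < e} \<subseteq> U)"

definition wshift :: "complex \<Rightarrow> (nat \<Rightarrow> complex) \<Rightarrow> (nat \<Rightarrow> complex)" where
  "wshift l x = (\<lambda>n. l * x (Suc n))"

definition lower_density :: "nat set \<Rightarrow> ereal" where
  "lower_density A = liminf (\<lambda>N. ereal (real (card {n. n \<le> N \<and> n \<in> A}) / real (N + 1)))"

definition hypercyclic :: "(nat \<Rightarrow> complex) set \<Rightarrow> ((nat \<Rightarrow> complex) \<Rightarrow> real)
    \<Rightarrow> ((nat \<Rightarrow> complex) \<Rightarrow> (nat \<Rightarrow> complex)) \<Rightarrow> (nat \<Rightarrow> complex) \<Rightarrow> bool" where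
  "hypercyclic X nrm T x \<longleftrightarrow> x \<in> X \<and>
     (\<forall>y\<in>X. \<forall>e>0. \<exists>n. nrm ((T ^^ n) x - y) < e)"

definition freq_hypercyclic :: "(nat \<Rightarrow> complex) set \<Rightarrow> ((nat \<Rightarrow> complex) \<Rightarrow> real)
    \<Rightarrow> ((nat \<Rightarrow> complex) \<Rightarrow> (nat \<Rightarrow> complex)) \<Rightarrow> (nat \<Rightarrow> complex) \<Rightarrow> bool" where
  "freq_hypercyclic X nrm T x \<longleftrightarrow> x \<in> X \<and>
     (\<forall>U. open_in_space X nrm U \<and> U \<noteq> {} \<longrightarrow> lower_density {n. (T ^^ n) x \<in> U} > 0)"

end

theory Submission
  imports Defs
begin

text \<open>Let \<open>B\<close> be the set of times at which the orbit of \<open>x\<close> lies in the open set of sequences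
  with all coordinates of modulus uniformly below 1. For \<open>n \<in> B\<close> this gives
  \<open>|\<lambda>|\<^sup>n |x(j)| < 1\<close> for all \<open>j \<ge> n\<close>. Since \<open>B\<close> has lower density \<open>> \<delta> > 0\<close>, every large \<open>j\<close>
  has such an \<open>n \<le> j\<close> with \<open>j < (n + 1)/\<delta>\<close>, so for \<open>m \<ge> 1/\<delta>\<close> we get
  \<open>|\<lambda>|\<^sup>j |x(j)|\<^sup>m \<le> |\<lambda>|\<^sup>m (|\<lambda>|\<^sup>n |x(j)|)\<^sup>m \<le> |\<lambda>|\<^sup>m\<close>. Thus the first coordinates \<open>\<lambda>\<^sup>j x(j)\<^sup>m\<close>
  of the orbit of \<open>x\<^sup>m\<close> stay bounded, and the orbit cannot come close to a large multiple of the
  first unit vector.\<close>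

definition sequence_space :: "real \<Rightarrow> (nat \<Rightarrow> complex) set \<Rightarrow> ((nat \<Rightarrow> complex) \<Rightarrow> real) \<Rightarrow> bool" where
  "sequence_space p X nrm \<longleftrightarrow>
     (1 \<le> p \<and> X = ell p \<and> nrm = ell_norm p) \<or> (X = c_zero \<and> nrm = sup_norm)"

lemma diff_in_ell:
  assumes p: "1 \<le> p" and a: "a \<in> ell p" and b: "b \<in> ell p"
  shows "a - b \<in> ell p"
proof -
  have "summable (\<lambda>n. 2 powr p * (norm (a n) powr p + norm (b n) powr p))"
    using a b by (auto simp: ell_def intro: summable_mult summable_add)
  moreover have "norm (norm ((a - b) n) powr p) \<le> 2 powr p * (norm (a n) powr p + norm (b n) powr p)"
    for n
  proof -
    have "norm ((a - b) n) \<le> 2 * max (norm (a n)) (norm (b n))"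
      using norm_triangle_ineq4[of "a n" "b n"] by auto
    hence "norm ((a - b) n) powr p \<le> (2 * max (norm (a n)) (norm (b n))) powr p"
      using p by (intro powr_mono2) auto
    also have "\<dots> = 2 powr p * max (norm (a n)) (norm (b n)) powr p"
      by (simp add: powr_mult)
    also have "\<dots> \<le> 2 powr p * (norm (a n) powr p + norm (b n) powr p)"
      by (intro mult_left_mono) (auto simp: max_def)
    finally show ?thesis by simp
  qed
  ultimately have "summable (\<lambda>n. norm ((a - b) n) powr p)"
    by (rule summable_comparison_test'[where N=0])
  thus ?thesis unfolding ell_def by simp
qed

lemma sequence_space_diff:
  "sequence_space p X nrm \<Longrightarrow> a \<in> X \<Longrightarrow> b \<in> X \<Longrightarrow> a - b \<in> X"
  unfolding sequence_space_def using diff_in_ell tendsto_diff[of a 0 sequentially b 0]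
  by (auto simp: c_zero_def fun_diff_def)

lemma sequence_space_norm_coord_le:
  assumes "sequence_space p X nrm" and z: "z \<in> X"
  shows "norm (z k) \<le> nrm z"
  using assms(1) unfolding sequence_space_def
proof
  assume h: "1 \<le> p \<and> X = ell p \<and> nrm = ell_norm p"
  hence "summable (\<lambda>n. norm (z n) powr p)" using z by (auto simp: ell_def)
  hence "norm (z k) powr p \<le> (\<Sum>n. norm (z n) powr p)"
    using sum_le_suminf[of _ "{k}"] by fastforce
  hence "(norm (z k) powr p) powr (1/p) \<le> (\<Sum>n. norm (z n) powr p) powr (1/p)"
    using h by (intro powr_mono2) auto
  thus ?thesis using h by (simp add: ell_norm_def powr_powr)
next
  assume h: "X = c_zero \<and> nrm = sup_norm"
  hence "Bseq z" using z by (simp add: c_zero_def convergent_imp_Bseq convergentI)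
  then obtain K where "\<And>n. norm (z n) \<le> K" by (auto simp: Bseq_def)
  hence "bdd_above (range (\<lambda>n. norm (z n)))" by (intro bdd_aboveI[where M=K]) auto
  thus ?thesis using h by (simp add: sup_norm_def cSup_upper)
qed

lemma sequence_space_scaled_shift:
  assumes "sequence_space p X nrm" and z: "z \<in> X"
  shows "(\<lambda>k. c * z (k + n)) \<in> X"
  using assms(1) unfolding sequence_space_def
proof
  assume h: "1 \<le> p \<and> X = ell p \<and> nrm = ell_norm p"
  hence "summable (\<lambda>k. norm (z (k + n)) powr p)"
    using z by (auto simp: ell_def intro: summable_ignore_initial_segment)
  hence "summable (\<lambda>k. norm c powr p * norm (z (k + n)) powr p)" by (rule summable_mult)
  thus ?thesis using h by (simp add: ell_def norm_mult powr_mult)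
next
  assume h: "X = c_zero \<and> nrm = sup_norm"
  hence "(\<lambda>k. z (k + n)) \<longlonglongrightarrow> 0" using z by (simp add: c_zero_def LIMSEQ_ignore_initial_segment)
  hence "(\<lambda>k. c * z (k + n)) \<longlonglongrightarrow> c * 0" by (intro tendsto_mult tendsto_const)
  thus ?thesis using h by (simp add: c_zero_def)
qed

lemma sequence_space_first_unit_vector:
  assumes "sequence_space p X nrm"
  shows "(\<lambda>k. if k = 0 then a else 0) \<in> X"
  using assms unfolding sequence_space_def
proof
  assume h: "1 \<le> p \<and> X = ell p \<and> nrm = ell_norm p"
  have "summable (\<lambda>k. norm (if k = 0 then a else 0) powr p)"
    by (rule summable_finite[of "{0}"]) auto
  thus ?thesis using h by (simp add: ell_def)
next
  assume h: "X = c_zero \<and> nrm = sup_norm"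
  have "eventually (\<lambda>k. (if k = 0 then a else 0) = 0) sequentially"
    using eventually_gt_at_top[of 0] by eventually_elim auto
  hence "(\<lambda>k. if k = 0 then a else (0::complex)) \<longlonglongrightarrow> 0"
    by (rule tendsto_eventually)
  thus ?thesis using h by (simp add: c_zero_def)
qed

lemma open_in_space_coordinatewise_ball:
  assumes s: "sequence_space p X nrm"
  shows "open_in_space X nrm {y\<in>X. \<exists>r<1. \<forall>k. norm (y k) \<le> r}"
  unfolding open_in_space_def
proof (intro conjI ballI)
  fix u assume "u \<in> {y\<in>X. \<exists>r<1. \<forall>k. norm (y k) \<le> r}"
  then obtain r where uX: "u \<in> X" and r: "r < 1" "\<And>k. norm (u k) \<le> r" by auto
  show "\<exists>e>0. {y \<in> X. nrm (y - u) < e} \<subseteq> {y\<in>X. \<exists>r<1. \<forall>k. norm (y k) \<le> r}"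
  proof (intro exI conjI subsetI)
    fix y assume "y \<in> {y \<in> X. nrm (y - u) < 1 - r}"
    hence yX: "y \<in> X" and yu: "nrm (y - u) < 1 - r" by auto
    have "norm (y k) \<le> nrm (y - u) + r" for k
    proof -
      have "norm (y k) \<le> norm (y k - u k) + norm (u k)"
        using norm_triangle_ineq2[of "y k" "u k"] by simp
      also have "norm (y k - u k) \<le> nrm (y - u)"
        using sequence_space_norm_coord_le[OF s sequence_space_diff[OF s yX uX], of k] by simp
      finally show ?thesis using r(2)[of k] by simp
    qed
    with yX yu show "y \<in> {y\<in>X. \<exists>r<1. \<forall>k. norm (y k) \<le> r}" by force
  qed (use r in simp)
qed auto

lemma funpow_wshift: "(wshift l ^^ n) z = (\<lambda>k. l ^ n * z (k + n))"
  by (induction n) (auto simp: wshift_def mult.assoc)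

lemma card_le_if_elements_small:
  assumes "\<forall>n\<in>B. n \<le> j \<longrightarrow> real n \<le> t - 1" and "t \<ge> 0"
  shows "real (card {n. n \<le> j \<and> n \<in> B}) \<le> t"
proof -
  have "{n. n \<le> j \<and> n \<in> B} \<subseteq> {..< nat \<lfloor>t\<rfloor>}"
  proof
    fix n assume "n \<in> {n. n \<le> j \<and> n \<in> B}"
    hence "real (n + 1) \<le> t" using assms(1) by auto
    hence "int (n + 1) \<le> \<lfloor>t\<rfloor>" by (simp only: le_floor_iff of_int_of_nat_eq)
    thus "n \<in> {..< nat \<lfloor>t\<rfloor>}" by simp
  qed
  hence "card {n. n \<le> j \<and> n \<in> B} \<le> nat \<lfloor>t\<rfloor>"
    using card_mono[OF finite_lessThan] by fastforce
  moreover have "real (nat \<lfloor>t\<rfloor>) \<le> t" using assms(2) by simp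
  ultimately show ?thesis by (meson of_nat_le_iff order_trans)
qed

lemma lower_density_gt_imp_late_elements:
  assumes "ereal \<delta> < lower_density B" and "0 \<le> \<delta>"
  shows "\<exists>N. \<forall>j\<ge>N. \<exists>n\<in>B. n \<le> j \<and> \<delta> * real (j + 1) - 1 < real n"
proof -
  have "eventually (\<lambda>j. ereal \<delta> < ereal (real (card {n. n \<le> j \<and> n \<in> B}) / real (j + 1)))
      sequentially"
    using assms(1) unfolding lower_density_def by (rule less_LiminfD)
  then obtain N where N: "\<And>j. j \<ge> N \<Longrightarrow> \<delta> * real (j + 1) < real (card {n. n \<le> j \<and> n \<in> B})"
    by (auto simp: eventually_sequentially field_simps)
  have "\<exists>n\<in>B. n \<le> j \<and> \<delta> * real (j + 1) - 1 < real n" if "j \<ge> N" for j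
    using card_le_if_elements_small[of B j "\<delta> * real (j + 1)"] N[OF that] assms(2)
    by (force simp: not_less)
  thus ?thesis by blast
qed

lemma weighted_power_le_from_returns:
  fixes a :: "nat \<Rightarrow> real" and L \<delta> :: real
  assumes L: "1 \<le> L" and a: "\<And>k. 0 \<le> a k"
    and small: "\<And>n k. n \<in> B \<Longrightarrow> L ^ n * a (k + n) < 1"
    and n: "n \<in> B" "n \<le> j" "\<delta> * real (j + 1) - 1 < real n"
    and m: "1 \<le> real m * \<delta>"
  shows "L ^ j * a j ^ m \<le> L ^ m"
proof -
  have "m > 0" using m by (cases m) auto
  hence "real m * (\<delta> * real (j + 1)) < real m * (real n + 1)"
    using n(3) by (intro mult_strict_left_mono) auto
  moreover have "real (j + 1) \<le> (real m * \<delta>) * real (j + 1)"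
    using m by (simp add: mult_right_mono)
  ultimately have "real j < real (n * m + m)" by (simp add: algebra_simps)
  hence j: "j \<le> n * m + m" by linarith
  have "(L ^ n * a j) ^ m \<le> 1"
    using small[OF n(1), of "j - n"] n(2) L a by (intro power_le_one) auto
  have "L ^ j * a j ^ m \<le> L ^ (n * m + m) * a j ^ m"
    using L j a by (intro mult_right_mono power_increasing) auto
  also have "\<dots> = L ^ m * (L ^ n * a j) ^ m"
    unfolding power_add power_mult power_mult_distrib by (simp add: ac_simps)
  also have "\<dots> \<le> L ^ m"
    using mult_left_le[OF \<open>(L ^ n * a j) ^ m \<le> 1\<close>, of "L ^ m"] L by simp
  finally show ?thesis .
qed

lemma freq_hypercyclic_wshift_small_returns:
  assumes s: "sequence_space p X nrm" and fhc: "freq_hypercyclic X nrm (wshift l) x"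
  obtains B where "lower_density B > 0" and "\<And>n k. n \<in> B \<Longrightarrow> norm l ^ n * norm (x (k + n)) < 1"
proof
  define U where "U = {y\<in>X. \<exists>r<1. \<forall>k. norm (y k) \<le> r}"
  have "(\<lambda>k. 0) \<in> U"
    using sequence_space_first_unit_vector[OF s, of 0] by (auto simp: U_def intro: exI[of _ 0])
  thus "lower_density {n. (wshift l ^^ n) x \<in> U} > 0"
    using fhc open_in_space_coordinatewise_ball[OF s] unfolding freq_hypercyclic_def U_def by blast
  fix n k assume "n \<in> {n. (wshift l ^^ n) x \<in> U}"
  then obtain r where "r < 1" "norm ((wshift l ^^ n) x k) \<le> r" by (auto simp: U_def)
  thus "norm l ^ n * norm (x (k + n)) < 1"
    by (simp add: funpow_wshift norm_mult norm_power)
qed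

lemma not_hypercyclic_wshift_if_Bseq:
  assumes s: "sequence_space p X nrm" and bounded: "Bseq (\<lambda>n. l ^ n * z n)"
  shows "\<not> hypercyclic X nrm (wshift l) z"
proof
  assume hc: "hypercyclic X nrm (wshift l) z"
  obtain K where K: "K > 0" "\<And>n. norm (l ^ n * z n) \<le> K" using bounded by (auto elim: BseqE)
  define y :: "nat \<Rightarrow> complex" where "y = (\<lambda>k. if k = 0 then of_real (K + 1) else 0)"
  have yX: "y \<in> X" unfolding y_def by (rule sequence_space_first_unit_vector[OF s])
  then obtain n where n: "nrm ((wshift l ^^ n) z - y) < 1"
    using hc unfolding hypercyclic_def by fastforce
  have "(wshift l ^^ n) z - y \<in> X"
    using hc unfolding funpow_wshift hypercyclic_def
    by (intro sequence_space_diff[OF s sequence_space_scaled_shift[OF s] yX]) auto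
  hence "norm (l ^ n * z n - of_real (K + 1)) < 1"
    using sequence_space_norm_coord_le[OF s, of _ 0] n by (fastforce simp: funpow_wshift y_def)
  moreover have "norm (of_real (K + 1) :: complex) \<le> norm (l ^ n * z n - of_real (K + 1)) + K"
    using norm_triangle_ineq2[of "of_real (K + 1)" "l ^ n * z n"] K(2)[of n]
    by (simp add: norm_minus_commute)
  ultimately show False using K(1) by simp
qed

theorem proposition1p2:
  fixes p :: real and X :: "(nat \<Rightarrow> complex) set" and nrm :: "(nat \<Rightarrow> complex) \<Rightarrow> real"
    and l :: complex and x :: "nat \<Rightarrow> complex"
  assumes space: "(1 \<le> p \<and> X = ell p \<and> nrm = ell_norm p) \<or> (X = c_zero \<and> nrm = sup_norm)"
    and l: "norm l > 1"
    and fhc: "freq_hypercyclic X nrm (wshift l) x"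
  shows "\<exists>M::nat. \<forall>m\<ge>M. \<not> hypercyclic X nrm (wshift l) (\<lambda>n. x n ^ m)"
proof -
  have s: "sequence_space p X nrm" using space by (simp add: sequence_space_def)
  obtain B where B: "lower_density B > 0"
    and small: "\<And>n k. n \<in> B \<Longrightarrow> norm l ^ n * norm (x (k + n)) < 1"
    using freq_hypercyclic_wshift_small_returns[OF s fhc] by blast
  obtain \<delta> where \<delta>: "0 < \<delta>" "ereal \<delta> < lower_density B"
    using ereal_dense2[OF B] by auto
  obtain N where N: "\<And>j. j \<ge> N \<Longrightarrow> \<exists>n\<in>B. n \<le> j \<and> \<delta> * real (j + 1) - 1 < real n"
    using lower_density_gt_imp_late_elements[OF \<delta>(2)] \<delta>(1) by auto
  have "\<not> hypercyclic X nrm (wshift l) (\<lambda>n. x n ^ m)" if m: "m \<ge> nat \<lceil>1 / \<delta>\<rceil>" for m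
  proof (rule not_hypercyclic_wshift_if_Bseq[OF s], rule Bseq_offset[where k=N], rule BseqI')
    have "1 / \<delta> \<le> real m" using m by linarith
    hence m\<delta>: "1 \<le> real m * \<delta>" using \<delta>(1) by (simp add: field_simps)
    fix j
    obtain n where n: "n \<in> B" "n \<le> j + N" "\<delta> * real (j + N + 1) - 1 < real n"
      using N[of "j + N"] by auto
    have "norm l ^ (j + N) * norm (x (j + N)) ^ m \<le> norm l ^ m"
      using l by (intro weighted_power_le_from_returns[where a="\<lambda>k. norm (x k)", OF _ _ small n m\<delta>])
        auto
    thus "norm (l ^ (j + N) * x (j + N) ^ m) \<le> norm l ^ m" by (simp add: norm_mult norm_power)
  qed
  thus ?thesis by blast
qed

end
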